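(* The set of N-small rational functions in $\alpha_1,\ldots,\alpha_r$ is closed under addition and multiplication.
   Context: For $f\in \mathbb{Z}[\alpha_1^{\pm 1},\ldots,\alpha_r^{\pm 1}]$ the Newton polytope $\mathcal N(f)\subset\mathbb{R}^r$ is the convex hull of the exponent vectors of the monomials of $f$ with nonzero coefficient. A rational function $h$ (an element of the fraction field of $\mathbb{Z}[\alpha_1^{\pm 1},\ldots,\alpha_r^{\pm 1}]$) written as $h=f_1/f_2$ with $f_1,f_2$ Laurent polynomials is called N-small if $\mathcal N(f_1)\subset\mathcal N(f_2)$; this does not depend on the chosen presentation. *)

theory Defs
  imports "HOL-Analysis.Analysis" "HOL-Library.Poly_Mapping" "HOL-Computational_Algebra.Fraction_Field"
begin

text \<open>Variables alpha_i are indexed by a finite (linearly ordered) type 'n, so r = CARD('n).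
  A Laurent monomial exponent is a finitely supported map 'n \<Rightarrow> int; a Laurent polynomial
  with integer coefficients is a finitely supported map from exponents to int, with
  convolution product (this is Z[alpha_1^{+-1},...,alpha_r^{+-1}]).\<close>

type_synonym 'n laurent = "('n \<Rightarrow>\<^sub>0 int) \<Rightarrow>\<^sub>0 int"

definition exp_vec :: "('n::finite \<Rightarrow>\<^sub>0 int) \<Rightarrow> real ^ 'n" where
  "exp_vec e = (\<chi> i. real_of_int (Poly_Mapping.lookup e i))"

definition newton :: "('n::finite) laurent \<Rightarrow> (real ^ 'n) set" where
  "newton f = convex hull (exp_vec ` Poly_Mapping.keys f)"

definition N_small :: "('n::{finite,linorder}) laurent fract \<Rightarrow> bool" where
  "N_small h \<longleftrightarrow> (\<exists>f1 f2. f2 \<noteq> 0 \<and> h = Fract f1 f2 \<and> newton f1 \<subseteq> newton f2)"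

end

theory Submission
  imports Defs
begin

text \<open>Newton polytopes are compared through their support functions: N(f) \<subseteq> N(g) iff every
  linear functional w attains on the exponents of g at least its maximum over those of f.
  Sums are then immediate, and products reduce to Ostrowski's observation that the maximum
  of w over the exponents of r * s is attained at a0 + b0, where a0 and b0 maximise w on r and
  on s; ties are broken by a monomial order, so that the coefficient of r * s at a0 + b0 is the
  single product of the leading coefficients and hence nonzero.\<close>

lemma exp_vec_add: "exp_vec (a + b) = exp_vec a + exp_vec b"
  by (simp add: exp_vec_def vec_eq_iff Poly_Mapping.lookup_add)

lemma exp_vec_diff: "exp_vec (a - b) = exp_vec a - exp_vec b"
  by (simp add: exp_vec_def vec_eq_iff Poly_Mapping.lookup_minus)

lemma exp_vec_in_newton: "e \<in> Poly_Mapping.keys f \<Longrightarrow> exp_vec e \<in> newton f"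
  unfolding newton_def by (simp add: hull_inc)

lemma convex_newton: "convex (newton f)"
  unfolding newton_def by simp

lemma closed_newton: "closed (newton f)"
  unfolding newton_def by (intro compact_imp_closed compact_convex_hull finite_imp_compact) simp

lemma newton_subset_iff:
  "newton f \<subseteq> newton g \<longleftrightarrow>
     (\<forall>w. \<forall>e\<in>Poly_Mapping.keys f. \<exists>e'\<in>Poly_Mapping.keys g. w \<bullet> exp_vec e \<le> w \<bullet> exp_vec e')"
  (is "?sub \<longleftrightarrow> ?dom")
proof
  assume sub: ?sub
  show ?dom
  proof (intro allI ballI, rule ccontr)
    fix w e
    assume e: "e \<in> Poly_Mapping.keys f"
      and "\<not> (\<exists>e'\<in>Poly_Mapping.keys g. w \<bullet> exp_vec e \<le> w \<bullet> exp_vec e')"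
    then have "exp_vec ` Poly_Mapping.keys g \<subseteq> {x. w \<bullet> x < w \<bullet> exp_vec e}" by auto
    then have "newton g \<subseteq> {x. w \<bullet> x < w \<bullet> exp_vec e}"
      unfolding newton_def by (intro hull_minimal convex_halfspace_lt)
    with sub exp_vec_in_newton[OF e] show False by auto
  qed
next
  assume dom: ?dom
  have "exp_vec e \<in> newton g" if e: "e \<in> Poly_Mapping.keys f" for e
  proof (rule ccontr)
    assume "exp_vec e \<notin> newton g"
    then obtain a b where ab: "a \<bullet> exp_vec e < b" "\<forall>x\<in>newton g. b < a \<bullet> x"
      using separating_hyperplane_closed_point[OF convex_newton closed_newton] by blast
    obtain e' where e': "e' \<in> Poly_Mapping.keys g" "(- a) \<bullet> exp_vec e \<le> (- a) \<bullet> exp_vec e'"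
      using dom e by blast
    have "b < a \<bullet> exp_vec e'" using ab(2) exp_vec_in_newton[OF e'(1)] by blast
    with ab(1) e'(2) show False by simp
  qed
  then show ?sub
    unfolding newton_def[of f] by (intro hull_minimal convex_newton) auto
qed

lemma newton_add_subset:
  assumes "newton p \<subseteq> newton r" "newton q \<subseteq> newton r"
  shows "newton (p + q) \<subseteq> newton r"
proof -
  have "exp_vec ` Poly_Mapping.keys (p + q) \<subseteq> exp_vec ` (Poly_Mapping.keys p \<union> Poly_Mapping.keys q)"
    using Poly_Mapping.keys_add by (rule image_mono)
  also have "\<dots> \<subseteq> newton r"
    using assms exp_vec_in_newton by blast
  finally have "exp_vec ` Poly_Mapping.keys (p + q) \<subseteq> newton r" .
  then show ?thesis
    unfolding newton_def[of "p + q"] by (intro hull_minimal convex_newton)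
qed

definition weighted_top :: "real ^ ('n::{finite,linorder}) \<Rightarrow> 'n laurent \<Rightarrow> ('n \<Rightarrow>\<^sub>0 int) \<Rightarrow> bool"
  where "weighted_top w r a0 \<longleftrightarrow> a0 \<in> Poly_Mapping.keys r \<and>
    (\<forall>a\<in>Poly_Mapping.keys r. w \<bullet> exp_vec a < w \<bullet> exp_vec a0 \<or>
                               w \<bullet> exp_vec a = w \<bullet> exp_vec a0 \<and> a \<le> a0)"

lemma weighted_top_exists:
  assumes "r \<noteq> 0"
  shows "\<exists>a0. weighted_top w r a0"
proof -
  let ?K = "Poly_Mapping.keys r"
  define M where "M = Max ((\<lambda>a. w \<bullet> exp_vec a) ` ?K)"
  have K: "finite ?K" "?K \<noteq> {}" using assms by auto
  have le_M: "w \<bullet> exp_vec a \<le> M" if "a \<in> ?K" for a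
    using K that unfolding M_def by auto
  have "M \<in> (\<lambda>a. w \<bullet> exp_vec a) ` ?K"
    using K unfolding M_def by (intro Max_in) auto
  then have H: "finite {a\<in>?K. w \<bullet> exp_vec a = M}" "{a\<in>?K. w \<bullet> exp_vec a = M} \<noteq> {}"
    using K by auto
  define a0 where "a0 = Max {a\<in>?K. w \<bullet> exp_vec a = M}"
  have a0: "a0 \<in> ?K" "w \<bullet> exp_vec a0 = M"
    using Max_in[OF H] unfolding a0_def by auto
  have "a \<le> a0" if "a \<in> ?K" "w \<bullet> exp_vec a = M" for a
    using H that unfolding a0_def by simp
  then have "weighted_top w r a0"
    unfolding weighted_top_def using a0 le_M by (auto simp: less_le)
  then show ?thesis ..
qed

lemma weighted_top_le: "weighted_top w r a0 \<Longrightarrow> a \<in> Poly_Mapping.keys r \<Longrightarrow> w \<bullet> exp_vec a \<le> w \<bullet> exp_vec a0"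
  unfolding weighted_top_def by force

lemma lookup_mult_weighted_top:
  assumes a0: "weighted_top w r a0" and b0: "weighted_top w s b0"
  shows "Poly_Mapping.lookup (r * s) (a0 + b0) = Poly_Mapping.lookup r a0 * Poly_Mapping.lookup s b0"
proof -
  let ?k = "a0 + b0"
  have inner: "(\<Sum>q. Poly_Mapping.lookup s q when ?k = l + q) = Poly_Mapping.lookup s (?k - l)" for l
  proof -
    have "(\<lambda>q. Poly_Mapping.lookup s q when ?k = l + q) =
          (\<lambda>q. if q = ?k - l then Poly_Mapping.lookup s q else 0)"
      by (auto simp: fun_eq_iff when_def algebra_simps)
    then have "(\<Sum>q. Poly_Mapping.lookup s q when ?k = l + q) =
          (\<Sum>q. if q = ?k - l then Poly_Mapping.lookup s q else 0)"
      by (rule arg_cong)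
    also have "\<dots> = Poly_Mapping.lookup s (?k - l)"
      by (rule Sum_any.delta)
    finally show ?thesis .
  qed
  have off_top: "Poly_Mapping.lookup r l * Poly_Mapping.lookup s (?k - l) = 0" if "l \<noteq> a0" for l
  proof (rule ccontr)
    assume "Poly_Mapping.lookup r l * Poly_Mapping.lookup s (?k - l) \<noteq> 0"
    then have "l \<in> Poly_Mapping.keys r" "?k - l \<in> Poly_Mapping.keys s"
      by (auto simp: Poly_Mapping.in_keys_iff)
    then have "w \<bullet> exp_vec l < w \<bullet> exp_vec a0 \<or> w \<bullet> exp_vec l = w \<bullet> exp_vec a0 \<and> l \<le> a0"
      and "w \<bullet> exp_vec (?k - l) < w \<bullet> exp_vec b0 \<or> w \<bullet> exp_vec (?k - l) = w \<bullet> exp_vec b0 \<and> ?k - l \<le> b0"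
      using a0 b0 unfolding weighted_top_def by blast+
    moreover have "w \<bullet> exp_vec l + w \<bullet> exp_vec (?k - l) = w \<bullet> exp_vec a0 + w \<bullet> exp_vec b0"
      by (simp add: exp_vec_diff exp_vec_add inner_diff_right inner_add_right)
    ultimately have "l \<le> a0" "?k - l \<le> b0" by linarith+
    with that have "l + (?k - l) < a0 + b0"
      by (metis add_less_le_mono order_le_neq_trans)
    then show False by simp
  qed
  have "Poly_Mapping.lookup (r * s) ?k = (\<Sum>l. Poly_Mapping.lookup r l * Poly_Mapping.lookup s (?k - l))"
    by (simp add: Poly_Mapping.lookup_mult inner)
  also have "\<dots> = (\<Sum>l. if l = a0 then Poly_Mapping.lookup r l * Poly_Mapping.lookup s (?k - l) else 0)"
    using off_top by (intro Sum_any.cong) auto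
  also have "\<dots> = Poly_Mapping.lookup r a0 * Poly_Mapping.lookup s b0"
    by simp
  finally show ?thesis .
qed

lemma keys_mult_weight_bound:
  fixes r s :: "('n::{finite,linorder}) laurent"
  assumes a: "a \<in> Poly_Mapping.keys r" and b: "b \<in> Poly_Mapping.keys s"
  shows "\<exists>c\<in>Poly_Mapping.keys (r * s). w \<bullet> exp_vec (a + b) \<le> w \<bullet> exp_vec c"
proof -
  have "r \<noteq> 0" "s \<noteq> 0" using a b by auto
  then obtain a0 b0 where a0: "weighted_top w r a0" and b0: "weighted_top w s b0"
    using weighted_top_exists[of r w] weighted_top_exists[of s w] by blast
  have "a0 \<in> Poly_Mapping.keys r" "b0 \<in> Poly_Mapping.keys s"
    using a0 b0 unfolding weighted_top_def by blast+
  then have "a0 + b0 \<in> Poly_Mapping.keys (r * s)"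
    unfolding Poly_Mapping.in_keys_iff lookup_mult_weighted_top[OF a0 b0] by simp
  moreover have "w \<bullet> exp_vec (a + b) \<le> w \<bullet> exp_vec (a0 + b0)"
    using weighted_top_le[OF a0 a] weighted_top_le[OF b0 b]
    by (simp add: exp_vec_add inner_add_right)
  ultimately show ?thesis ..
qed

lemma newton_mult_mono:
  fixes p q r s :: "('n::{finite,linorder}) laurent"
  assumes "newton p \<subseteq> newton r" "newton q \<subseteq> newton s"
  shows "newton (p * q) \<subseteq> newton (r * s)"
  unfolding newton_subset_iff
proof (intro allI ballI)
  fix w e
  assume "e \<in> Poly_Mapping.keys (p * q)"
  then obtain a b where ab: "e = a + b" "a \<in> Poly_Mapping.keys p" "b \<in> Poly_Mapping.keys q"
    using Poly_Mapping.keys_mult by blast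
  obtain a' where a': "a' \<in> Poly_Mapping.keys r" "w \<bullet> exp_vec a \<le> w \<bullet> exp_vec a'"
    using assms(1) ab unfolding newton_subset_iff by blast
  obtain b' where b': "b' \<in> Poly_Mapping.keys s" "w \<bullet> exp_vec b \<le> w \<bullet> exp_vec b'"
    using assms(2) ab unfolding newton_subset_iff by blast
  obtain c where c: "c \<in> Poly_Mapping.keys (r * s)" "w \<bullet> exp_vec (a' + b') \<le> w \<bullet> exp_vec c"
    using keys_mult_weight_bound a'(1) b'(1) by blast
  have "w \<bullet> exp_vec e \<le> w \<bullet> exp_vec (a' + b')"
    using a'(2) b'(2) by (simp add: ab exp_vec_add inner_add_right)
  with c show "\<exists>e'\<in>Poly_Mapping.keys (r * s). w \<bullet> exp_vec e \<le> w \<bullet> exp_vec e'"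
    by (meson order_trans)
qed

theorem lemma3p5:
  fixes h g :: "('n::{finite,linorder}) laurent fract"
  assumes "N_small h" and "N_small g"
  shows "N_small (h + g) \<and> N_small (h * g)"
proof -
  obtain f1 f2 where h: "f2 \<noteq> 0" "h = Fract f1 f2" "newton f1 \<subseteq> newton f2"
    using assms(1) unfolding N_small_def by blast
  obtain g1 g2 where g: "g2 \<noteq> 0" "g = Fract g1 g2" "newton g1 \<subseteq> newton g2"
    using assms(2) unfolding N_small_def by blast
  have "newton (f1 * g2 + g1 * f2) \<subseteq> newton (f2 * g2)"
    using newton_mult_mono[OF h(3) order_refl[of "newton g2"]]
      newton_mult_mono[OF g(3) order_refl[of "newton f2"]]
    by (intro newton_add_subset) (simp_all add: mult.commute)
  then have "N_small (h + g)"
    unfolding N_small_def using h g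
    by (intro exI[of _ "f1 * g2 + g1 * f2"] exI[of _ "f2 * g2"]) simp
  moreover have "N_small (h * g)"
    unfolding N_small_def using h g newton_mult_mono[OF h(3) g(3)]
    by (intro exI[of _ "f1 * g1"] exI[of _ "f2 * g2"]) simp
  ultimately show ?thesis ..
qed

end
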